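(* Let $n\ge 1$, $k\ge 1$ be integers, let $\lambda\in\mathbb{F}_{2^n}^*$, and let $f:\mathbb{F}_{2^n}\to\mathbb{F}_2$ be given by $f(x)=Tr(\lambda x^{2^k+1})$. Then $f$ is negabent if and only if the polynomial $P(x)=\lambda^{2^{n-k}}x^{2^{n-k}}+\lambda x^{2^k}+x$ is a permutation polynomial of $\mathbb{F}_{2^n}$.
   Context: $Tr=Tr_1^n:\mathbb{F}_{2^n}\to\mathbb{F}_2$ is the absolute trace, $Tr(x)=x+x^2+\dots+x^{2^{n-1}}$. Fix a self-dual basis $\{\alpha_1,\dots,\alpha_n\}$ of $\mathbb{F}_{2^n}$ over $\mathbb{F}_2$ (i.e. $Tr(\alpha_i\alpha_j)=\delta_{ij}$) and identify $x=\sum x_i\alpha_i$ with $(x_1,\dots,x_n)\in\mathbb{F}_2^n$; let $wt(x)$ be the number of nonzero coordinates $x_i$. For $f:\mathbb{F}_{2^n}\to\mathbb{F}_2$ the nega-Hadamard transform is $\mathcal{N}_f(\mu)=2^{-n/2}\sum_{x}(-1)^{f(x)+Tr(\mu x)}\,\mathrm{i}^{wt(x)}$ with $\mathrm{i}=\sqrt{-1}$, and $f$ is negabent if $|\mathcal{N}_f(\mu)|=1$ for all $\mu\in\mathbb{F}_{2^n}$. *)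

theory Defs
  imports Complex_Main
begin

text \<open>The finite field with 2^n elements is modelled as a finite field type 'a
  with CARD('a) = 2^n. Elements of F_2 are represented as 0, 1 of 'a.\<close>

definition tr :: "nat \<Rightarrow> 'a::field \<Rightarrow> 'a" where
  "tr n x = (\<Sum>i<n. x ^ (2 ^ i))"

definition self_dual_basis :: "nat \<Rightarrow> (nat \<Rightarrow> 'a::field) \<Rightarrow> bool" where
  "self_dual_basis n \<alpha> \<longleftrightarrow>
     (\<forall>i<n. \<forall>j<n. tr n (\<alpha> i * \<alpha> j) = (if i = j then 1 else 0))"

definition coords :: "nat \<Rightarrow> (nat \<Rightarrow> 'a::field) \<Rightarrow> 'a \<Rightarrow> nat \<Rightarrow> bool" where
  "coords n \<alpha> x = (THE c. (\<forall>i\<ge>n. \<not> c i) \<and> x = (\<Sum>i<n. if c i then \<alpha> i else 0))"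

definition wt :: "nat \<Rightarrow> (nat \<Rightarrow> 'a::field) \<Rightarrow> 'a \<Rightarrow> nat" where
  "wt n \<alpha> x = card {i. i < n \<and> coords n \<alpha> x i}"

definition chi :: "'a::field \<Rightarrow> complex" where
  "chi y = (if y = 0 then 1 else -1)"

definition nega_hadamard ::
  "nat \<Rightarrow> (nat \<Rightarrow> 'a::{field,finite}) \<Rightarrow> ('a \<Rightarrow> 'a) \<Rightarrow> 'a \<Rightarrow> complex" where
  "nega_hadamard n \<alpha> f \<mu> =
     (1 / sqrt (2 ^ n)) * (\<Sum>x\<in>UNIV. chi (f x + tr n (\<mu> * x)) * \<i> ^ wt n \<alpha> x)"

definition negabent :: "nat \<Rightarrow> (nat \<Rightarrow> 'a::{field,finite}) \<Rightarrow> ('a \<Rightarrow> 'a) \<Rightarrow> bool" where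
  "negabent n \<alpha> f \<longleftrightarrow> (\<forall>\<mu>. cmod (nega_hadamard n \<alpha> f \<mu>) = 1)"

end

(* With respect to a self-dual basis the coordinates of x are Tr(alpha_i x), so the weights satisfy
   i^wt(x) * conj(i^wt(x + a)) = (-1)^Tr(x a) * conj(i^wt(a)).  Expanding |N_f(u)|^2 as a double sum
   therefore leaves inner sums  sum_x (-1)^Tr(g x + g (x + a) + x a).  For g x = lam x^(2^k+1) the
   exponent is Tr(g a) + Tr(x P(a)), because Tr(c y^(2^k)) = Tr(c^(2^(n-k)) y); so the inner sum
   vanishes unless P(a) = 0, and |N_f(u)|^2 = sum over the kernel K of P of c_a (-1)^Tr(u a) with
   c_0 = 1 and all c_a nonzero.  By orthogonality of characters this is 1 for every u iff K = {0},
   i.e. iff the additive map P is bijective. *)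

theory Submission
  imports Defs "HOL-Computational_Algebra.Primes"
begin

lemma CHAR_eq_2_if_card_UNIV:
  assumes "card (UNIV :: 'a::{field,finite} set) = 2 ^ n"
  shows "CHAR('a) = 2"
proof -
  have "(\<Sum>x\<in>UNIV. x + 1 :: 'a) = (\<Sum>x\<in>UNIV. x)"
    by (rule sum.reindex_bij_witness[of _ "\<lambda>x. x - 1" "\<lambda>x. x + 1"]) auto
  then have "of_nat (card (UNIV :: 'a set)) = (0 :: 'a)"
    by (simp add: sum.distrib)
  then have "CHAR('a) dvd 2 ^ n"
    unfolding of_nat_eq_0_iff_char_dvd assms .
  moreover have "prime CHAR('a)"
    by (simp add: finite_imp_CHAR_pos prime_CHAR_semidom)
  ultimately have "CHAR('a) dvd 2"
    using prime_dvd_power by blast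
  then show ?thesis
    using \<open>prime CHAR('a)\<close> by (simp add: primes_dvd_imp_eq)
qed

lemma add_self_CHAR_2:
  assumes "CHAR('a::ring_1) = 2"
  shows "(x :: 'a) + x = 0"
  by (rule eq_neg_iff_add_eq_0[THEN iffD1]) (simp add: uminus_CHAR_2[OF assms])

lemma power_two_power_add_CHAR_2:
  assumes "CHAR('a::comm_semiring_1) = 2"
  shows "((x :: 'a) + y) ^ (2 ^ j) = x ^ (2 ^ j) + y ^ (2 ^ j)"
  using freshmans_dream'[of "2 ^ j" j x y] assms by simp

lemma power_two_power_sum_CHAR_2:
  assumes "CHAR('a::comm_semiring_1) = 2"
  shows "(\<Sum>i\<in>I. f i :: 'a) ^ (2 ^ j) = (\<Sum>i\<in>I. f i ^ (2 ^ j))"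
  using freshmans_dream_sum'[of "2 ^ j" j f I] assms by simp

lemma finite_field_power_card_eq_self:
  "(x :: 'a::{field,finite}) ^ card (UNIV :: 'a set) = x"
proof (cases "x = 0")
  case False
  let ?U = "UNIV - {0 :: 'a}"
  have "x ^ card ?U * \<Prod>?U = (\<Prod>y\<in>?U. x * y)"
    by (simp add: prod.distrib)
  also have "\<dots> = \<Prod>?U"
    by (rule prod.reindex_bij_witness[of _ "\<lambda>y. y / x" "\<lambda>y. x * y"]) (use False in auto)
  finally have "x ^ card ?U = 1"
    by simp
  moreover have "card (UNIV :: 'a set) = Suc (card ?U)"
    using finite_UNIV_card_ge_0[where 'a = 'a] by (simp add: card_Diff_singleton)
  ultimately show ?thesis
    by (simp only: power_Suc mult_1_right)
qed (simp add: finite_UNIV_card_ge_0)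

lemma finite_field_power_card_power_eq_self:
  "(x :: 'a::{field,finite}) ^ (card (UNIV :: 'a set) ^ j) = x"
proof (induction j)
  case (Suc j)
  have "x ^ (card (UNIV :: 'a set) ^ Suc j) = (x ^ (card (UNIV :: 'a set) ^ j)) ^ card (UNIV :: 'a set)"
    by (simp only: power_Suc2 power_mult)
  then show ?case
    by (simp only: Suc finite_field_power_card_eq_self)
qed simp

lemma additive_tr:
  assumes "CHAR('a::field) = 2"
  shows "additive (tr n :: 'a \<Rightarrow> 'a)"
  by unfold_locales (simp add: tr_def power_two_power_add_CHAR_2[OF assms] sum.distrib)

lemma tr_power_two:
  assumes "card (UNIV :: 'a::{field,finite} set) = 2 ^ n"
  shows "tr n (x ^ 2) = tr n (x :: 'a)"
proof -
  have "x + tr n (x ^ 2) = (\<Sum>i<Suc n. x ^ 2 ^ i)"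
    unfolding tr_def sum.lessThan_Suc_shift by (simp add: power_mult[symmetric] mult.commute)
  also have "\<dots> = tr n x + x ^ 2 ^ n"
    unfolding tr_def by simp
  finally show ?thesis
    using finite_field_power_card_eq_self[of x] assms by simp
qed

lemma tr_power_two_power:
  assumes "card (UNIV :: 'a::{field,finite} set) = 2 ^ n"
  shows "tr n (x ^ 2 ^ j) = tr n (x :: 'a)"
proof (induction j)
  case (Suc j)
  then show ?case
    using tr_power_two[OF assms, of "x ^ 2 ^ j"] by (simp add: power_mult[symmetric] mult.commute)
qed simp

lemma tr_eq_0_or_1:
  assumes "card (UNIV :: 'a::{field,finite} set) = 2 ^ n"
  shows "tr n (x :: 'a) = 0 \<or> tr n x = 1"
proof -
  have "tr n x ^ 2 = (\<Sum>i<n. (x ^ 2 ^ i) ^ 2)"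
    unfolding tr_def
    using power_two_power_sum_CHAR_2[OF CHAR_eq_2_if_card_UNIV[OF assms], of _ _ 1] by simp
  also have "\<dots> = tr n (x ^ 2)"
    unfolding tr_def by (simp add: power_mult[symmetric] mult.commute)
  finally have "tr n x ^ 2 = tr n (x ^ 2)" .
  then have "tr n x * (tr n x - 1) = 0"
    using tr_power_two[OF assms] by (simp add: power2_eq_square algebra_simps)
  then show ?thesis
    by simp
qed

lemma chi_of_nat_CHAR_2:
  assumes "CHAR('a::field) = 2"
  shows "chi (of_nat m :: 'a) = (-1) ^ m"
proof -
  have "(of_nat m :: 'a) = of_nat 2 * of_nat (m div 2) + of_nat (m mod 2)"
    by (simp only: of_nat_mult[symmetric] of_nat_add[symmetric] mult_div_mod_eq)
  also have "\<dots> = of_nat (m mod 2)"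
    using of_nat_CHAR[where 'a = 'a] assms by simp
  finally show ?thesis
    unfolding chi_def by (cases "even m") (simp_all add: minus_one_power_iff odd_iff_mod_2_eq_one)
qed

lemma i_power_card_mult_cnj_sym_diff:
  assumes "finite A" "finite B"
  shows "\<i> ^ card A * cnj (\<i> ^ card (sym_diff A B)) = (-1) ^ card (A \<inter> B) * cnj (\<i> ^ card B)"
proof -
  have "card (A \<union> B) = card (sym_diff A B) + card (A \<inter> B)"
    using assms by (subst card_Un_disjoint[symmetric]) (auto intro: arg_cong[where f = card])
  then have "card A + card B = card (sym_diff A B) + 2 * card (A \<inter> B)"
    using card_Un_Int[OF assms] by simp
  then have i_powers: "\<i> ^ card A * \<i> ^ card B = \<i> ^ card (sym_diff A B) * (-1) ^ card (A \<inter> B)"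
    unfolding power_add[symmetric] by (simp add: power_add power_mult)
  have cnj_i_power: "cnj (\<i> ^ m) = inverse (\<i> ^ m)" for m
    by (simp flip: power_inverse)
  show ?thesis
    unfolding cnj_i_power using i_powers by (simp add: field_simps)
qed

lemma norm_eq_1_iff_mult_cnj: "cmod z = 1 \<longleftrightarrow> z * cnj z = 1"
proof -
  have "cmod z = 1 \<longleftrightarrow> cmod z ^ 2 = 1"
    using power2_eq_iff_nonneg[of "cmod z" 1] by simp
  also have "\<dots> \<longleftrightarrow> z * cnj z = 1"
    by (metis complex_norm_square of_real_1 of_real_eq_iff)
  finally show ?thesis .
qed

lemma additive_bij_iff_kernel_trivial:
  fixes h :: "'a::{ab_group_add,finite} \<Rightarrow> 'a"
  assumes "additive h"
  shows "bij h \<longleftrightarrow> (\<forall>x. h x = 0 \<longrightarrow> x = 0)"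
proof -
  interpret additive h by fact
  have "inj h \<longleftrightarrow> (\<forall>x. h x = 0 \<longrightarrow> x = 0)"
    unfolding inj_def by (metis diff zero right_minus_eq)
  then show ?thesis
    using finite_UNIV_inj_surj[of h] by (auto simp: bij_def)
qed

locale gf2n_self_dual =
  fixes n :: nat and \<alpha> :: "nat \<Rightarrow> 'a::{field,finite}"
  assumes card_UNIV: "card (UNIV :: 'a set) = 2 ^ n"
    and self_dual: "self_dual_basis n \<alpha>"
begin

lemma CHAR_2: "CHAR('a) = 2"
  using CHAR_eq_2_if_card_UNIV[OF card_UNIV] .

lemma two_eq_0 [simp]: "(2 :: 'a) = 0"
  using of_nat_CHAR[where 'a = 'a] by (simp add: CHAR_2)

lemma add_self [simp]: "x + x = (0 :: 'a)"
  using add_self_CHAR_2[OF CHAR_2] .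

lemma add_eq_0_iff_eq: "x + y = 0 \<longleftrightarrow> x = (y :: 'a)"
  using add_right_cancel[of x y y] by simp

interpretation tr: additive "tr n :: 'a \<Rightarrow> 'a"
  using additive_tr[OF CHAR_2] .

lemma n_pos: "n > 0"
proof -
  have "2 \<le> card (UNIV :: 'a set)"
    using card_mono[of UNIV "{0, 1 :: 'a}"] by simp
  then have "2 \<le> (2 :: nat) ^ n"
    using card_UNIV by simp
  then show ?thesis
    by (cases n) simp_all
qed

lemma tr_basis_mult: "i < n \<Longrightarrow> j < n \<Longrightarrow> tr n (\<alpha> i * \<alpha> j) = (if i = j then 1 else 0)"
  using self_dual by (simp add: self_dual_basis_def)

definition add_char :: "'a \<Rightarrow> complex" where
  "add_char z = chi (tr n z)"

lemma add_char_add: "add_char (x + y) = add_char x * add_char y"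
  using tr_eq_0_or_1[OF card_UNIV, of x] tr_eq_0_or_1[OF card_UNIV, of y]
  by (auto simp: add_char_def chi_def tr.add)

lemma add_char_0 [simp]: "add_char 0 = 1"
  by (simp add: add_char_def chi_def tr.zero)

lemma add_char_eq_1_or_minus_1: "add_char x = 1 \<or> add_char x = -1"
  by (simp add: add_char_def chi_def)

lemma cnj_add_char [simp]: "cnj (add_char x) = add_char x"
  using add_char_eq_1_or_minus_1[of x] by auto

lemma add_char_nonzero [simp]: "add_char x \<noteq> 0"
  using add_char_eq_1_or_minus_1[of x] by auto

lemma sum_add_char_mult:
  "(\<Sum>x\<in>UNIV. add_char (x * b)) = (if b = 0 then 2 ^ n else 0)"
proof (cases "b = 0")
  case True
  then show ?thesis
    using card_UNIV by simp
next
  case False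
  let ?c = "\<alpha> 0 * \<alpha> 0"
  have "add_char ?c = -1"
    using tr_basis_mult[of 0 0] n_pos by (simp add: add_char_def chi_def)
  have "(\<Sum>x\<in>UNIV. add_char x) = (\<Sum>x\<in>UNIV. add_char (x + ?c))"
    by (rule sum.reindex_bij_witness[of _ "\<lambda>x. x + ?c" "\<lambda>x. x + ?c"]) (auto simp: add.assoc)
  also have "\<dots> = - (\<Sum>x\<in>UNIV. add_char x)"
    by (simp add: add_char_add \<open>add_char ?c = -1\<close> sum_negf)
  finally have "(\<Sum>x\<in>UNIV. add_char x) = 0"
    by simp
  moreover have "(\<Sum>x\<in>UNIV. add_char (x * b)) = (\<Sum>x\<in>UNIV. add_char x)"
    by (rule sum.reindex_bij_witness[of _ "\<lambda>x. x / b" "\<lambda>x. x * b"]) (use False in auto)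
  ultimately show ?thesis
    using False by simp
qed


definition support :: "'a \<Rightarrow> nat set" where
  "support x = {i. i < n \<and> tr n (\<alpha> i * x) = 1}"

definition basis_sum :: "nat set \<Rightarrow> 'a" where
  "basis_sum A = (\<Sum>i\<in>A. \<alpha> i)"

lemma support_subset: "support x \<subseteq> {..<n}"
  by (auto simp: support_def)

lemma finite_support [simp]: "finite (support x)"
  using support_subset finite_subset by blast

lemma tr_basis_mult_basis_sum:
  assumes "A \<subseteq> {..<n}" "j < n"
  shows "tr n (\<alpha> j * basis_sum A) = (if j \<in> A then 1 else 0)"
proof -
  have "tr n (\<alpha> j * basis_sum A) = (\<Sum>i\<in>A. tr n (\<alpha> j * \<alpha> i))"
    by (simp add: basis_sum_def sum_distrib_left tr.sum)
  also have "\<dots> = (\<Sum>i\<in>A. if j = i then 1 else 0)"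
    using assms by (intro sum.cong) (auto simp: tr_basis_mult)
  finally show ?thesis
    using finite_subset[OF assms(1)] by simp
qed

lemma support_basis_sum:
  assumes "A \<subseteq> {..<n}"
  shows "support (basis_sum A) = A"
  using assms tr_basis_mult_basis_sum[OF assms] by (auto simp: support_def split: if_splits)

lemma basis_sum_support [simp]: "basis_sum (support x) = x"
proof -
  have "inj_on basis_sum (Pow {..<n})"
    by (rule inj_on_inverseI[of _ support]) (simp add: support_basis_sum)
  then have "card (basis_sum ` Pow {..<n}) = card (UNIV :: 'a set)"
    by (simp add: card_image card_Pow card_UNIV)
  then have "basis_sum ` Pow {..<n} = UNIV"
    by (intro card_subset_eq) auto
  then obtain A where "A \<subseteq> {..<n}" "x = basis_sum A"
    by (metis Pow_iff UNIV_I imageE)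
  then show ?thesis
    by (simp add: support_basis_sum)
qed

lemma coords_eq_support: "coords n \<alpha> x = (\<lambda>i. i \<in> support x)"
  unfolding coords_def
proof (rule the_equality)
  have "(\<Sum>i<n. if i \<in> support x then \<alpha> i else 0) = basis_sum (support x)"
    using support_subset by (simp add: basis_sum_def sum.If_cases Int_absorb1)
  moreover have "\<forall>i\<ge>n. i \<notin> support x"
    using support_subset[of x] by auto
  ultimately show "(\<forall>i\<ge>n. i \<notin> support x) \<and> x = (\<Sum>i<n. if i \<in> support x then \<alpha> i else 0)"
    by simp
next
  fix c assume c: "(\<forall>i\<ge>n. \<not> c i) \<and> x = (\<Sum>i<n. if c i then \<alpha> i else 0)"
  let ?C = "{i. i < n \<and> c i}"
  have "x = basis_sum ?C"
    using c by (simp add: basis_sum_def sum.If_cases Collect_conj_eq lessThan_def Int_commute)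
  then have "support x = ?C"
    by (simp add: support_basis_sum subset_iff)
  then show "c = (\<lambda>i. i \<in> support x)"
    using c by (auto simp: fun_eq_iff not_le[symmetric])
qed

lemma wt_eq_card_support: "wt n \<alpha> x = card (support x)"
  using support_subset by (auto simp: wt_def coords_eq_support intro: arg_cong[where f = card])

lemma wt_0 [simp]: "wt n \<alpha> 0 = 0"
  by (simp add: wt_eq_card_support support_def tr.zero)

lemma support_add: "support (x + a) = sym_diff (support x) (support a)"
proof -
  have xor: "u + v = 1 \<longleftrightarrow> (u = 1) \<noteq> (v = 1)" if "u = 0 \<or> u = 1" "v = 0 \<or> v = 1" for u v :: 'a
    using that by auto
  show ?thesis
    by (auto simp: support_def distrib_left tr.add xor tr_eq_0_or_1[OF card_UNIV])
qed

lemma tr_mult_eq_card_support: "tr n (x * a) = of_nat (card (support x \<inter> support a))"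
proof -
  have "tr n (x * a) = (\<Sum>i\<in>support x. tr n (\<alpha> i * a))"
    by (subst basis_sum_support[symmetric, of x]) (simp add: basis_sum_def sum_distrib_right tr.sum)
  also have "\<dots> = (\<Sum>i\<in>support x. if i \<in> support a then 1 else 0)"
    using tr_eq_0_or_1[OF card_UNIV] support_subset by (intro sum.cong) (auto simp: support_def)
  finally show ?thesis
    by (simp add: sum.If_cases)
qed

lemma i_power_wt_mult_cnj:
  "\<i> ^ wt n \<alpha> x * cnj (\<i> ^ wt n \<alpha> (x + a)) = add_char (x * a) * cnj (\<i> ^ wt n \<alpha> a)"
  unfolding wt_eq_card_support support_add add_char_def tr_mult_eq_card_support
    chi_of_nat_CHAR_2[OF CHAR_2]
  by (rule i_power_card_mult_cnj_sym_diff) simp_all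

lemma nega_hadamard_mult_cnj:
  fixes g :: "'a \<Rightarrow> 'a"
  defines "N \<equiv> nega_hadamard n \<alpha> (\<lambda>x. tr n (g x))"
  shows "N u * cnj (N u) = (\<Sum>a\<in>UNIV. cnj (\<i> ^ wt n \<alpha> a) * add_char (u * a)
                              * (\<Sum>x\<in>UNIV. add_char (g x + g (x + a) + x * a))) / 2 ^ n"
proof -
  define h where "h x = add_char (g x + u * x) * \<i> ^ wt n \<alpha> x" for x
  have N: "N u = (\<Sum>x\<in>UNIV. h x) / sqrt (2 ^ n)"
    by (simp add: N_def nega_hadamard_def h_def add_char_def tr.add)
  have h_mult_cnj: "h x * cnj (h (x + a))
      = cnj (\<i> ^ wt n \<alpha> a) * add_char (u * a) * add_char (g x + g (x + a) + x * a)" for x a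
  proof -
    have "h x * cnj (h (x + a)) = add_char (g x + u * x) * add_char (g (x + a) + u * (x + a))
        * (\<i> ^ wt n \<alpha> x * cnj (\<i> ^ wt n \<alpha> (x + a)))"
      by (simp only: h_def complex_cnj_mult cnj_add_char mult_ac)
    also have "\<dots> = add_char (g x + u * x + (g (x + a) + u * (x + a)) + x * a) * cnj (\<i> ^ wt n \<alpha> a)"
      by (simp only: i_power_wt_mult_cnj add_char_add mult_ac)
    also have "g x + u * x + (g (x + a) + u * (x + a)) + x * a = g x + g (x + a) + x * a + u * a"
      by (simp add: algebra_simps)
    finally show ?thesis
      by (simp only: add_char_add mult_ac)
  qed
  have "(\<Sum>x\<in>UNIV. h x) * cnj (\<Sum>y\<in>UNIV. h y) = (\<Sum>x\<in>UNIV. \<Sum>y\<in>UNIV. h x * cnj (h y))"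
    by (simp add: sum_product)
  also have "\<dots> = (\<Sum>x\<in>UNIV. \<Sum>a\<in>UNIV. h x * cnj (h (x + a)))"
  proof (rule sum.cong[OF refl])
    fix x
    show "(\<Sum>y\<in>UNIV. h x * cnj (h y)) = (\<Sum>a\<in>UNIV. h x * cnj (h (x + a)))"
      by (rule sum.reindex_bij_witness[of _ "\<lambda>a. x + a" "\<lambda>y. y - x"]) auto
  qed
  also have "\<dots> = (\<Sum>a\<in>UNIV. \<Sum>x\<in>UNIV. h x * cnj (h (x + a)))"
    by (rule sum.swap)
  also have "\<dots> = (\<Sum>a\<in>UNIV. cnj (\<i> ^ wt n \<alpha> a) * add_char (u * a)
                              * (\<Sum>x\<in>UNIV. add_char (g x + g (x + a) + x * a)))"
    by (simp only: h_mult_cnj sum_distrib_left)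
  moreover have "complex_of_real (sqrt (2 ^ n)) * complex_of_real (sqrt (2 ^ n)) = 2 ^ n"
    by (simp flip: of_real_mult)
  ultimately show ?thesis
    unfolding N by simp
qed

lemma add_char_expansion_eq_1_iff:
  assumes "0 \<in> K" "c 0 = 1" "\<forall>a\<in>K. c a \<noteq> 0"
  shows "(\<forall>u. (\<Sum>a\<in>K. c a * add_char (u * a)) = 1) \<longleftrightarrow> K = {0}"
proof
  assume expansion: "\<forall>u. (\<Sum>a\<in>K. c a * add_char (u * a)) = 1"
  show "K = {0}"
  proof (rule ccontr)
    assume "K \<noteq> {0}"
    then obtain b where "b \<in> K" "b \<noteq> 0"
      using assms(1) by blast
    (* orthogonality: pairing with add_char (u * b) and summing over u isolates c b *)
    have "(\<Sum>u\<in>UNIV. (\<Sum>a\<in>K. c a * add_char (u * a)) * add_char (u * b))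
        = (\<Sum>a\<in>K. c a * (\<Sum>u\<in>UNIV. add_char (u * (a + b))))"
      by (simp add: sum_distrib_left sum_distrib_right sum.swap[of _ UNIV] add_char_add
          distrib_left mult.assoc)
    also have "\<dots> = (\<Sum>a\<in>K. if a = b then c b * 2 ^ n else 0)"
      by (intro sum.cong refl) (auto simp: sum_add_char_mult add_eq_0_iff_eq)
    also have "\<dots> = c b * 2 ^ n"
      using \<open>b \<in> K\<close> by (simp add: sum.delta')
    finally have "c b * 2 ^ n = (\<Sum>u\<in>UNIV. add_char (u * b))"
      using expansion by simp
    then show False
      using \<open>b \<in> K\<close> \<open>b \<noteq> 0\<close> assms(3) by (simp add: sum_add_char_mult)
  qed
qed (use assms in simp)

definition frob_inv_exp :: "nat \<Rightarrow> nat" where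
  "frob_inv_exp k = (n - k mod n) mod n"

lemma dvd_add_frob_inv_exp: "n dvd k + frob_inv_exp k"
proof -
  have "(k + frob_inv_exp k) mod n = (k mod n + (n - k mod n)) mod n"
    by (simp add: frob_inv_exp_def mod_add_left_eq mod_add_right_eq)
  also have "\<dots> = 0"
    using n_pos by simp
  finally show ?thesis
    by (simp add: mod_eq_0_iff_dvd)
qed

lemma power_two_power_frob_inv_exp: "(y ^ 2 ^ k) ^ 2 ^ frob_inv_exp k = (y :: 'a)"
proof -
  obtain j where "k + frob_inv_exp k = n * j"
    using dvd_add_frob_inv_exp by (auto elim: dvdE)
  have "(y ^ 2 ^ k) ^ 2 ^ frob_inv_exp k = y ^ 2 ^ (k + frob_inv_exp k)"
    by (simp add: power_mult[symmetric] power_add)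
  also have "\<dots> = y ^ (card (UNIV :: 'a set) ^ j)"
    using \<open>k + frob_inv_exp k = n * j\<close> by (simp add: card_UNIV power_mult)
  finally show ?thesis
    by (simp add: finite_field_power_card_power_eq_self)
qed

lemma tr_mult_power_two_power: "tr n (c * y ^ 2 ^ k) = tr n (c ^ 2 ^ frob_inv_exp k * (y :: 'a))"
proof -
  have "tr n (c * y ^ 2 ^ k) = tr n ((c * y ^ 2 ^ k) ^ 2 ^ frob_inv_exp k)"
    using tr_power_two_power[OF card_UNIV, where x = "c * y ^ 2 ^ k" and j = "frob_inv_exp k"] by simp
  then show ?thesis
    by (simp add: power_mult_distrib power_two_power_frob_inv_exp)
qed

definition linpoly :: "nat \<Rightarrow> 'a \<Rightarrow> 'a \<Rightarrow> 'a" where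
  "linpoly k lam x = lam ^ 2 ^ frob_inv_exp k * x ^ 2 ^ frob_inv_exp k + lam * x ^ 2 ^ k + x"

lemma additive_linpoly: "additive (linpoly k lam)"
  by unfold_locales
    (simp add: linpoly_def power_two_power_add_CHAR_2[OF CHAR_2] algebra_simps)

lemma add_char_quadratic_polar:
  "add_char (lam * x ^ (2 ^ k + 1) + lam * (x + a) ^ (2 ^ k + 1) + x * a)
     = add_char (lam * a ^ (2 ^ k + 1)) * add_char (x * linpoly k lam a)"
proof -
  let ?m = "frob_inv_exp k"
  have "lam * x ^ (2 ^ k + 1) + lam * (x + a) ^ (2 ^ k + 1) + x * a
      = lam * a ^ (2 ^ k + 1) + x * (lam * a ^ 2 ^ k + a) + (lam * a) * x ^ 2 ^ k"
    by (simp add: power_two_power_add_CHAR_2[OF CHAR_2] algebra_simps)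
  then have "add_char (lam * x ^ (2 ^ k + 1) + lam * (x + a) ^ (2 ^ k + 1) + x * a)
      = add_char (lam * a ^ (2 ^ k + 1)) * (add_char (x * (lam * a ^ 2 ^ k + a))
          * add_char ((lam * a) * x ^ 2 ^ k))"
    by (simp only: add_char_add mult.assoc)
  also have "add_char ((lam * a) * x ^ 2 ^ k) = add_char (x * (lam ^ 2 ^ ?m * a ^ 2 ^ ?m))"
    by (simp add: add_char_def tr_mult_power_two_power power_mult_distrib mult.commute)
  also have "add_char (x * (lam * a ^ 2 ^ k + a)) * \<dots> = add_char (x * linpoly k lam a)"
    by (simp only: linpoly_def add_char_add[symmetric]) (simp add: algebra_simps)
  finally show ?thesis .
qed

lemma nega_hadamard_quadratic_mult_cnj:
  fixes k :: nat and lam :: 'a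
  defines "N \<equiv> nega_hadamard n \<alpha> (\<lambda>x. tr n (lam * x ^ (2 ^ k + 1)))"
  shows "N u * cnj (N u) = (\<Sum>a\<in>{a. linpoly k lam a = 0}.
           cnj (\<i> ^ wt n \<alpha> a) * add_char (lam * a ^ (2 ^ k + 1)) * add_char (u * a))"
proof -
  have inner: "(\<Sum>x\<in>UNIV. add_char (lam * x ^ (2 ^ k + 1) + lam * (x + a) ^ (2 ^ k + 1) + x * a))
      = (if linpoly k lam a = 0 then add_char (lam * a ^ (2 ^ k + 1)) * 2 ^ n else 0)" for a
    unfolding add_char_quadratic_polar sum_distrib_left[symmetric] sum_add_char_mult by simp
  show ?thesis
    unfolding N_def nega_hadamard_mult_cnj inner
    by (simp add: sum.If_cases if_distrib mult_ac flip: sum_distrib_left)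
qed

end

theorem proposition3:
  fixes n k :: nat and lam :: "'a::{field,finite}" and \<alpha> :: "nat \<Rightarrow> 'a"
  assumes "card (UNIV :: 'a set) = 2 ^ n" and "n \<ge> 1" and "k \<ge> 1"
    and "self_dual_basis n \<alpha>"
    and "lam \<noteq> 0"
  shows "negabent n \<alpha> (\<lambda>x. tr n (lam * x ^ (2 ^ k + 1)))
     \<longleftrightarrow> bij (\<lambda>x. lam ^ (2 ^ ((n - k mod n) mod n)) * x ^ (2 ^ ((n - k mod n) mod n))
                  + lam * x ^ (2 ^ k) + x)"
proof -
  (* n \<ge> 1 follows from the cardinality *)
  interpret gf2n_self_dual n \<alpha>
    using assms(1,4) by unfold_locales
  let ?K = "{a. linpoly k lam a = 0}"
  let ?c = "\<lambda>a. cnj (\<i> ^ wt n \<alpha> a) * add_char (lam * a ^ (2 ^ k + 1))"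
  have "negabent n \<alpha> (\<lambda>x. tr n (lam * x ^ (2 ^ k + 1)))
      \<longleftrightarrow> (\<forall>u. (\<Sum>a\<in>?K. ?c a * add_char (u * a)) = 1)"
    unfolding negabent_def norm_eq_1_iff_mult_cnj nega_hadamard_quadratic_mult_cnj ..
  also have "\<dots> \<longleftrightarrow> ?K = {0}"
    by (rule add_char_expansion_eq_1_iff)
      (simp_all add: additive.zero[OF additive_linpoly])
  also have "\<dots> \<longleftrightarrow> bij (linpoly k lam)"
    using additive_bij_iff_kernel_trivial[OF additive_linpoly] additive.zero[OF additive_linpoly]
    by auto
  finally show ?thesis
    unfolding linpoly_def[abs_def] frob_inv_exp_def .
qed

end
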